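(* Let $(g,\alpha)$ be a null contact structure on an oriented three-manifold $M$ which is K-contact. Then $(g,\alpha)$ is Sasakian.
   Context: Let $M$ be an oriented three-manifold with a Lorentzian metric $g$ of signature $(-,+,+)$, oriented and time-oriented; set $s_g=-1$. $\star_g$ denotes the Hodge star of $g$ and the orientation, defined by $\beta\wedge\star_g\gamma=g^{-1}(\beta,\gamma)\,\nu_g$; $\sharp$ is the musical isomorphism induced by $g$, $\iota_v$ the interior product, $\mathcal{L}$ the Lie derivative. Exterior derivative convention: $\mathrm{d}\alpha(X,Y)=X(\alpha(Y))-Y(\alpha(X))-\alpha([X,Y])$. A null contact structure is a pair $(g,\alpha)$ with $\alpha\in\Omega^1(M)$ nowhere vanishing such that $\alpha=\star_g\mathrm{d}\alpha$ and $|\alpha|_g^2=0$. Its Reeb vector field is $\xi=\alpha^\sharp$, $\phi(v)=-s_g(\iota_v\star_g\alpha)^\sharp$, and $\mathfrak{h}=\mathcal{L}_\xi\phi$. It is called Sasakian if $\mathfrak{h}=0$ and K-contact if $\mathcal{L}_\xi g=0$. *)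

theory Defs
  imports "HOL-Analysis.Analysis"
begin

text \<open>Local coordinate rendering on an open set U of R^3 (an oriented chart of M,
with the standard orientation dx1,dx2,dx3 of R^3).  One-forms and vector fields are
given by their component vectors real^3, (0,2)-tensors and 2-forms by matrices
real^3^3 (entry i j = value on the coordinate vectors d_i, d_j), and (1,1)-tensors by
matrices F with F *v v the image of the vector v.\<close>

definition coord_line :: "3 \<Rightarrow> (real^3 \<Rightarrow> real) \<Rightarrow> real^3 \<Rightarrow> real \<Rightarrow> real" where
  "coord_line i f p = (\<lambda>t. f (p + t *\<^sub>R axis i 1))"

definition pd :: "3 \<Rightarrow> (real^3 \<Rightarrow> real) \<Rightarrow> real^3 \<Rightarrow> real" where
  "pd i f p = deriv (coord_line i f p) 0"

definition pd_exists :: "3 \<Rightarrow> (real^3 \<Rightarrow> real) \<Rightarrow> real^3 \<Rightarrow> bool" where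
  "pd_exists i f p \<longleftrightarrow> coord_line i f p differentiable (at 0)"

fun smoothk :: "nat \<Rightarrow> (real^3 \<Rightarrow> real) \<Rightarrow> (real^3) set \<Rightarrow> bool" where
  "smoothk 0 f U = continuous_on U f"
| "smoothk (Suc k) f U = (continuous_on U f \<and> (\<forall>i. \<forall>p\<in>U. pd_exists i f p)
                          \<and> (\<forall>i. smoothk k (pd i f) U))"

definition smooth_fun_on :: "(real^3) set \<Rightarrow> (real^3 \<Rightarrow> real) \<Rightarrow> bool" where
  "smooth_fun_on U f \<longleftrightarrow> (\<forall>k. smoothk k f U)"

definition eta3 :: "real^3^3" where
  "eta3 = (\<chi> i j. if i = j then (if i = 1 then -1 else 1) else 0)"

definition lorentzian :: "real^3^3 \<Rightarrow> bool" where
  "lorentzian G \<longleftrightarrow> transpose G = G \<and>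
     (\<exists>P::real^3^3. invertible P \<and> transpose P ** G ** P = eta3)"

text \<open>Lorentzian metric on U, smooth and time-oriented (the chart is positively oriented).\<close>
definition lorentz_metric_on :: "(real^3) set \<Rightarrow> (real^3 \<Rightarrow> real^3^3) \<Rightarrow> bool" where
  "lorentz_metric_on U g \<longleftrightarrow> open U \<and> (\<forall>p\<in>U. lorentzian (g p))
     \<and> (\<forall>i j. smooth_fun_on U (\<lambda>p. g p $ i $ j))
     \<and> (\<exists>T. continuous_on U T \<and> (\<forall>p\<in>U. T p \<bullet> (g p *v T p) < 0))"

text \<open>Sign of the determinant of a Lorentzian metric.\<close>
definition s_g :: real where "s_g = -1"

definition is_2form :: "real^3^3 \<Rightarrow> bool" where
  "is_2form w \<longleftrightarrow> (\<forall>i j. w $ i $ j = - w $ j $ i)"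

text \<open>(b \<and> w)(d_1,d_2,d_3) for a 1-form b and a 2-form w (also equal to (w \<and> b)(d_1,d_2,d_3)).\<close>
definition wedge12 :: "real^3 \<Rightarrow> real^3^3 \<Rightarrow> real" where
  "wedge12 b w = b$1 * w$2$3 - b$2 * w$1$3 + b$3 * w$1$2"

text \<open>Induced inner products g^{-1}(.,.) on 1-forms and 2-forms (Gi = inverse metric).\<close>
definition ip1 :: "real^3^3 \<Rightarrow> real^3 \<Rightarrow> real^3 \<Rightarrow> real" where
  "ip1 Gi a b = (\<Sum>i\<in>UNIV. \<Sum>j\<in>UNIV. Gi$i$j * a$i * b$j)"

definition ip2 :: "real^3^3 \<Rightarrow> real^3^3 \<Rightarrow> real^3^3 \<Rightarrow> real" where
  "ip2 Gi w z = (1/2) * (\<Sum>i\<in>UNIV. \<Sum>j\<in>UNIV. \<Sum>k\<in>UNIV. \<Sum>l\<in>UNIV.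
                     Gi$i$k * Gi$j$l * w$i$j * z$k$l)"

text \<open>Riemannian volume form nu_g evaluated on (d_1,d_2,d_3).\<close>
definition vol :: "real^3^3 \<Rightarrow> real" where
  "vol G = sqrt \<bar>det G\<bar>"

definition hodge1 :: "real^3^3 \<Rightarrow> real^3 \<Rightarrow> real^3^3" where
  "hodge1 G a = (THE w. is_2form w \<and>
      (\<forall>b. wedge12 b w = ip1 (matrix_inv G) b a * vol G))"

definition hodge2 :: "real^3^3 \<Rightarrow> real^3^3 \<Rightarrow> real^3" where
  "hodge2 G w = (THE a. \<forall>b. is_2form b \<longrightarrow> wedge12 a b = ip2 (matrix_inv G) b w * vol G)"

definition dform :: "(real^3 \<Rightarrow> real^3) \<Rightarrow> real^3 \<Rightarrow> real^3^3" where
  "dform a p = (\<chi> i j. pd i (\<lambda>q. a q $ j) p - pd j (\<lambda>q. a q $ i) p)"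

definition null_contact :: "(real^3) set \<Rightarrow> (real^3 \<Rightarrow> real^3^3) \<Rightarrow> (real^3 \<Rightarrow> real^3) \<Rightarrow> bool" where
  "null_contact U g a \<longleftrightarrow> lorentz_metric_on U g
     \<and> (\<forall>i. smooth_fun_on U (\<lambda>p. a p $ i))
     \<and> (\<forall>p\<in>U. a p \<noteq> 0)
     \<and> (\<forall>p\<in>U. a p = hodge2 (g p) (dform a p))
     \<and> (\<forall>p\<in>U. ip1 (matrix_inv (g p)) (a p) (a p) = 0)"

definition reeb :: "(real^3 \<Rightarrow> real^3^3) \<Rightarrow> (real^3 \<Rightarrow> real^3) \<Rightarrow> real^3 \<Rightarrow> real^3" where
  "reeb g a p = matrix_inv (g p) *v a p"

text \<open>phi(v) = - s_g (iota_v star alpha)^sharp, as a (1,1)-tensor (matrix).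
  (iota_v w)_j = sum_i v_i w_ij = (transpose w *v v)_j.\<close>
definition phi :: "(real^3 \<Rightarrow> real^3^3) \<Rightarrow> (real^3 \<Rightarrow> real^3) \<Rightarrow> real^3 \<Rightarrow> real^3^3" where
  "phi g a p = (- s_g) *\<^sub>R (matrix_inv (g p) ** transpose (hodge1 (g p) (a p)))"

definition lie11 :: "(real^3 \<Rightarrow> real^3) \<Rightarrow> (real^3 \<Rightarrow> real^3^3) \<Rightarrow> real^3 \<Rightarrow> real^3^3" where
  "lie11 X F p = (\<chi> k i.
      (\<Sum>m\<in>UNIV. X p $ m * pd m (\<lambda>q. F q $ k $ i) p)
    - (\<Sum>m\<in>UNIV. F p $ m $ i * pd m (\<lambda>q. X q $ k) p)
    + (\<Sum>m\<in>UNIV. F p $ k $ m * pd i (\<lambda>q. X q $ m) p))"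

definition lie02 :: "(real^3 \<Rightarrow> real^3) \<Rightarrow> (real^3 \<Rightarrow> real^3^3) \<Rightarrow> real^3 \<Rightarrow> real^3^3" where
  "lie02 X G p = (\<chi> i j.
      (\<Sum>m\<in>UNIV. X p $ m * pd m (\<lambda>q. G q $ i $ j) p)
    + (\<Sum>m\<in>UNIV. G p $ m $ j * pd i (\<lambda>q. X q $ m) p)
    + (\<Sum>m\<in>UNIV. G p $ i $ m * pd j (\<lambda>q. X q $ m) p))"

definition frak_h :: "(real^3 \<Rightarrow> real^3^3) \<Rightarrow> (real^3 \<Rightarrow> real^3) \<Rightarrow> real^3 \<Rightarrow> real^3^3" where
  "frak_h g a = lie11 (reeb g a) (phi g a)"

definition sasakian :: "(real^3) set \<Rightarrow> (real^3 \<Rightarrow> real^3^3) \<Rightarrow> (real^3 \<Rightarrow> real^3) \<Rightarrow> bool" where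
  "sasakian U g a \<longleftrightarrow> (\<forall>p\<in>U. frak_h g a p = 0)"

definition K_contact :: "(real^3) set \<Rightarrow> (real^3 \<Rightarrow> real^3^3) \<Rightarrow> (real^3 \<Rightarrow> real^3) \<Rightarrow> bool" where
  "K_contact U g a \<longleftrightarrow> (\<forall>p\<in>U. lie02 (reeb g a) g p = 0)"

end

theory Submission
  imports Defs
begin

(* In coordinates the Hodge star of a 1-form is a multiple of the cross-product matrix [x]_x
   (cross_matrix x), so phi = vol_g g^-1 [xi]_x is built from g, the orientation and xi alone.
   With J = D xi, the Lie derivative of phi along xi is the variation of this expression along xi,
   minus J phi, plus phi J.  K-contactness says that g varies along xi by -(J^T g + g J), and then
   all terms cancel by the identity J^T [x]_x + [x]_x J + [J x]_x = tr J [x]_x. *)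

lemma matrix_add_rdistrib: "(A + B) ** C = A ** C + B ** (C :: 'a::semiring_1^'p^'n)"
  by (simp add: matrix_matrix_mult_def vec_eq_iff sum.distrib algebra_simps)

lemma matrix_diff_ldistrib: "A ** (B - C) = A ** B - A ** (C :: 'a::ring_1^'p^'n)"
  by (simp add: matrix_matrix_mult_def vec_eq_iff sum_subtractf algebra_simps)

lemma matrix_diff_rdistrib: "(A - B) ** C = A ** C - B ** (C :: 'a::ring_1^'p^'n)"
  by (simp add: matrix_matrix_mult_def vec_eq_iff sum_subtractf algebra_simps)

lemma matrix_minus_left: "(- A) ** B = - (A ** B :: 'a::ring_1^'p^'m)"
  by (simp add: matrix_matrix_mult_def vec_eq_iff sum_negf)

lemma matrix_minus_right: "A ** (- B) = - (A ** B :: 'a::ring_1^'p^'m)"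
  by (simp add: matrix_matrix_mult_def vec_eq_iff sum_negf)

lemma trace_uminus: "trace (- A) = - trace (A :: 'a::comm_ring_1^'n^'n)"
  by (simp add: trace_def sum_negf)

lemma trace_scaleR: "trace (c *\<^sub>R A) = c * trace (A :: real^'n^'n)"
  by (simp add: trace_def sum_distrib_left)

lemma trace_transpose: "trace (transpose A) = trace (A :: 'a::semiring_1^'n^'n)"
  by (simp add: trace_def transpose_def)

lemma matrix_inv_right:
  fixes A :: "'a::semiring_1^'n^'n"
  assumes "invertible A"
  shows "A ** matrix_inv A = mat 1"
  using someI_ex[OF assms[unfolded invertible_def]] by (simp add: matrix_inv_def)

lemma matrix_inv_left:
  fixes A :: "'a::semiring_1^'n^'n"
  assumes "invertible A"
  shows "matrix_inv A ** A = mat 1"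
  using someI_ex[OF assms[unfolded invertible_def]] by (simp add: matrix_inv_def)

lemma matrix_inv_unique:
  fixes A B :: "'a::semiring_1^'n^'n"
  assumes "A ** B = mat 1" "B ** A = mat 1"
  shows "matrix_inv A = B"
proof -
  have "invertible A"
    using assms unfolding invertible_def by blast
  then have "matrix_inv A = matrix_inv A ** (A ** B)" "matrix_inv A ** A = mat 1"
    using assms matrix_inv_left by auto
  then show ?thesis
    by (simp add: matrix_mul_assoc)
qed

definition adjugate3 :: "real^3^3 \<Rightarrow> real^3^3" where
  "adjugate3 A = vector [
    vector [A$2$2*A$3$3 - A$2$3*A$3$2, A$1$3*A$3$2 - A$1$2*A$3$3, A$1$2*A$2$3 - A$1$3*A$2$2],
    vector [A$2$3*A$3$1 - A$2$1*A$3$3, A$1$1*A$3$3 - A$1$3*A$3$1, A$1$3*A$2$1 - A$1$1*A$2$3],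
    vector [A$2$1*A$3$2 - A$2$2*A$3$1, A$1$2*A$3$1 - A$1$1*A$3$2, A$1$1*A$2$2 - A$1$2*A$2$1]]"

lemma matrix_mult_adjugate3: "A ** adjugate3 A = det A *\<^sub>R mat 1"
  by (simp add: adjugate3_def matrix_matrix_mult_def sum_3 det_3 vec_eq_iff forall_3 vector_def mat_def
      algebra_simps)

lemma adjugate3_mult_matrix: "adjugate3 A ** A = det A *\<^sub>R mat 1"
  by (simp add: adjugate3_def matrix_matrix_mult_def sum_3 det_3 vec_eq_iff forall_3 vector_def mat_def
      algebra_simps)

lemma matrix_inv_adjugate3:
  assumes "det A \<noteq> 0"
  shows "matrix_inv A = (1 / det A) *\<^sub>R adjugate3 A"
  using assms
  by (intro matrix_inv_unique)
     (simp_all add: matrix_scalar_ac matrix_mult_adjugate3 adjugate3_mult_matrix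
        flip: scalar_matrix_assoc)

lemma det_lt_0_if_lorentzian:
  assumes "lorentzian G"
  shows "det G < 0"
proof -
  obtain P :: "real^3^3" where "transpose P ** G ** P = eta3"
    using assms unfolding lorentzian_def by blast
  moreover have "det eta3 = -1"
    by (simp add: det_3 eta3_def)
  ultimately have "det P ^ 2 * det G = -1"
    by (metis det_mul det_transpose power2_eq_square mult.commute mult.left_commute)
  then show ?thesis
    by (smt (verit) mult_nonneg_nonneg zero_le_power2)
qed

definition cross_matrix :: "real^3 \<Rightarrow> real^3^3" where
  "cross_matrix x = vector [vector [0, - x$3, x$2], vector [x$3, 0, - x$1], vector [- x$2, x$1, 0]]"

lemma cross_matrix_zero: "cross_matrix 0 = 0"
  by (simp add: cross_matrix_def vec_eq_iff forall_3 vector_def)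

lemma cross_matrix_add: "cross_matrix (x + y) = cross_matrix x + cross_matrix y"
  by (simp add: cross_matrix_def vec_eq_iff forall_3 vector_def)

lemma cross_matrix_scaleR: "cross_matrix (c *\<^sub>R x) = c *\<^sub>R cross_matrix x"
  by (simp add: cross_matrix_def vec_eq_iff forall_3 vector_def)

lemma transpose_cross_matrix: "transpose (cross_matrix x) = - cross_matrix x"
  by (simp add: transpose_def cross_matrix_def vec_eq_iff forall_3 vector_def)

(* Infinitesimal form of M^T [M x]_x M = det M [x]_x. *)
lemma transpose_mult_cross_matrix:
  "transpose J ** cross_matrix x + cross_matrix x ** J + cross_matrix (J *v x) = trace J *\<^sub>R cross_matrix x"
  by (simp add: cross_matrix_def matrix_matrix_mult_def matrix_vector_mult_def transpose_def trace_def
      sum_3 vec_eq_iff forall_3 vector_def algebra_simps)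

lemma ip1_eq_sum: "ip1 M b a = (\<Sum>i\<in>UNIV. b$i * (M *v a)$i)"
  by (simp add: ip1_def matrix_vector_mult_def sum_distrib_left algebra_simps)

lemma hodge1_eq_cross_matrix: "hodge1 G a = (- vol G) *\<^sub>R cross_matrix (matrix_inv G *v a)"
  unfolding hodge1_def
proof (rule the_equality)
  show "is_2form ((- vol G) *\<^sub>R cross_matrix (matrix_inv G *v a)) \<and>
    (\<forall>b. wedge12 b ((- vol G) *\<^sub>R cross_matrix (matrix_inv G *v a)) = ip1 (matrix_inv G) b a * vol G)"
    by (simp add: is_2form_def wedge12_def ip1_eq_sum cross_matrix_def forall_3 vector_def sum_3
        algebra_simps)
next
  fix w
  assume w: "is_2form w \<and> (\<forall>b. wedge12 b w = ip1 (matrix_inv G) b a * vol G)"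
  then have skew: "w$i$j = - w$j$i" for i j
    unfolding is_2form_def by blast
  have wedge_axis: "wedge12 (axis i 1) w = ip1 (matrix_inv G) (axis i 1) a * vol G" for i :: 3
    using w by blast
  show "w = (- vol G) *\<^sub>R cross_matrix (matrix_inv G *v a)"
    using wedge_axis[of 1] wedge_axis[of 2] wedge_axis[of 3]
      skew[of 1 1] skew[of 2 2] skew[of 3 3] skew[of 1 2] skew[of 1 3] skew[of 2 3]
    by (simp add: wedge12_def ip1_eq_sum cross_matrix_def vec_eq_iff forall_3 vector_def sum_3 axis_def
        algebra_simps)
qed

lemma phi_eq_cross_matrix: "phi g a p = vol (g p) *\<^sub>R (matrix_inv (g p) ** cross_matrix (reeb g a p))"
  unfolding phi_def hodge1_eq_cross_matrix transpose_scalar transpose_cross_matrix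
  by (simp add: s_g_def reeb_def matrix_scalar_ac scalar_matrix_assoc)

definition mat_pd :: "3 \<Rightarrow> (real^3 \<Rightarrow> real^'n^'m) \<Rightarrow> real^3 \<Rightarrow> real^'n^'m" where
  "mat_pd m F p = (\<chi> i j. pd m (\<lambda>q. F q $ i $ j) p)"

definition coord_jacobian :: "(real^3 \<Rightarrow> real^3) \<Rightarrow> real^3 \<Rightarrow> real^3^3" where
  "coord_jacobian X p = (\<chi> k m. pd m (\<lambda>q. X q $ k) p)"

lemma lie11_matrix_form:
  "lie11 X F p = (\<Sum>m\<in>UNIV. X p $ m *\<^sub>R mat_pd m F p)
     - coord_jacobian X p ** F p + F p ** coord_jacobian X p"
  by (simp add: lie11_def mat_pd_def coord_jacobian_def vec_eq_iff matrix_matrix_mult_def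
      algebra_simps)

lemma lie02_matrix_form:
  "lie02 X G p = (\<Sum>m\<in>UNIV. X p $ m *\<^sub>R mat_pd m G p)
     + transpose (coord_jacobian X p) ** G p + G p ** coord_jacobian X p"
  by (simp add: lie02_def mat_pd_def coord_jacobian_def vec_eq_iff matrix_matrix_mult_def transpose_def
      algebra_simps)

lemma coord_jacobian_mult:
  "coord_jacobian X p *v v = (\<Sum>m\<in>UNIV. v $ m *\<^sub>R column m (coord_jacobian X p))"
  by (simp add: coord_jacobian_def column_def vec_eq_iff matrix_vector_mult_def
      algebra_simps)

lemma pd_exists_if_smooth_fun_on:
  assumes "smooth_fun_on U f" "p \<in> U"
  shows "pd_exists m f p"
  using assms smoothk.simps(2)[of 0 f U] unfolding smooth_fun_on_def by blast

definition has_matrix_derivative :: "(real \<Rightarrow> real^'n^'m) \<Rightarrow> real^'n^'m \<Rightarrow> real \<Rightarrow> bool" where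
  "has_matrix_derivative A A' t \<longleftrightarrow> (\<forall>i j. ((\<lambda>s. A s $ i $ j) has_real_derivative A' $ i $ j) (at t))"

definition has_vec_derivative :: "(real \<Rightarrow> real^'n) \<Rightarrow> real^'n \<Rightarrow> real \<Rightarrow> bool" where
  "has_vec_derivative x x' t \<longleftrightarrow> (\<forall>i. ((\<lambda>s. x s $ i) has_real_derivative x' $ i) (at t))"

lemma has_matrix_derivative_const: "has_matrix_derivative (\<lambda>s. C) 0 t"
  by (simp add: has_matrix_derivative_def)

lemma has_matrix_derivative_scaleR:
  assumes "(f has_real_derivative f') (at t)" "has_matrix_derivative A A' t"
  shows "has_matrix_derivative (\<lambda>s. f s *\<^sub>R A s) (f' *\<^sub>R A t + f t *\<^sub>R A') t"
  using assms unfolding has_matrix_derivative_def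
  by (auto intro!: derivative_eq_intros simp: algebra_simps)

lemma has_matrix_derivative_mult:
  assumes "has_matrix_derivative A A' t" "has_matrix_derivative B B' t"
  shows "has_matrix_derivative (\<lambda>s. A s ** B s) (A' ** B t + A t ** B') t"
  unfolding has_matrix_derivative_def
proof (intro allI)
  fix i j
  have "((\<lambda>s. \<Sum>k\<in>UNIV. A s$i$k * B s$k$j) has_real_derivative
      (\<Sum>k\<in>UNIV. A'$i$k * B t$k$j + B'$k$j * A t$i$k)) (at t)"
    using assms unfolding has_matrix_derivative_def by (intro DERIV_sum DERIV_mult) auto
  then show "((\<lambda>s. (A s ** B s) $ i $ j) has_real_derivative (A' ** B t + A t ** B') $ i $ j) (at t)"
    by (simp add: matrix_matrix_mult_def sum.distrib algebra_simps)
qed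

lemma has_vec_derivative_matrix_vector_mult:
  assumes "has_matrix_derivative A A' t" "has_vec_derivative x x' t"
  shows "has_vec_derivative (\<lambda>s. A s *v x s) (A' *v x t + A t *v x') t"
  unfolding has_vec_derivative_def
proof (intro allI)
  fix i
  have "((\<lambda>s. \<Sum>k\<in>UNIV. A s$i$k * x s$k) has_real_derivative
      (\<Sum>k\<in>UNIV. A'$i$k * x t$k + x'$k * A t$i$k)) (at t)"
    using assms unfolding has_matrix_derivative_def has_vec_derivative_def
    by (intro DERIV_sum DERIV_mult) auto
  then show "((\<lambda>s. (A s *v x s) $ i) has_real_derivative (A' *v x t + A t *v x') $ i) (at t)"
    by (simp add: matrix_vector_mult_def sum.distrib algebra_simps)
qed

lemma has_matrix_derivative_cross_matrix:
  assumes "has_vec_derivative x x' t"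
  shows "has_matrix_derivative (\<lambda>s. cross_matrix (x s)) (cross_matrix x') t"
  unfolding has_matrix_derivative_def
proof (intro allI)
  fix i j :: 3
  have "\<And>k. ((\<lambda>s. x s $ k) has_real_derivative x' $ k) (at t)"
    using assms by (simp add: has_vec_derivative_def)
  then show "((\<lambda>s. cross_matrix (x s) $ i $ j) has_real_derivative cross_matrix x' $ i $ j) (at t)"
    using exhaust_3[of i] exhaust_3[of j]
    by (auto intro!: derivative_eq_intros simp: cross_matrix_def vector_def)
qed

lemma has_matrix_derivative_deriv:
  assumes "\<And>i j. (\<lambda>s. A s $ i $ j) differentiable (at t)"
  shows "has_matrix_derivative A (\<chi> i j. deriv (\<lambda>s. A s $ i $ j) t) t"
  using assms by (simp add: has_matrix_derivative_def DERIV_deriv_iff_real_differentiable)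

lemma has_matrix_derivative_transform_eventually:
  assumes "\<forall>\<^sub>F s in nhds t. A s = B s" "has_matrix_derivative A A' t"
  shows "has_matrix_derivative B A' t"
  unfolding has_matrix_derivative_def
proof (intro allI)
  fix i j
  have "\<forall>\<^sub>F s in nhds t. A s $ i $ j = B s $ i $ j"
    using assms(1) by eventually_elim simp
  from DERIV_cong_ev[OF refl this refl] assms(2)
  show "((\<lambda>s. B s $ i $ j) has_real_derivative A' $ i $ j) (at t)"
    unfolding has_matrix_derivative_def by blast
qed

lemma has_matrix_derivative_unique:
  assumes "has_matrix_derivative A A' t" "has_matrix_derivative A A'' t"
  shows "A' = A''"
  using assms unfolding has_matrix_derivative_def vec_eq_iff by (blast intro: DERIV_unique)

lemma has_real_derivative_det3:
  assumes "has_matrix_derivative A A' t"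
  shows "((\<lambda>s. det (A s)) has_real_derivative trace (adjugate3 (A t) ** A')) (at t)"
  using assms unfolding has_matrix_derivative_def det_3
  by (auto intro!: derivative_eq_intros
      simp: trace_def adjugate3_def matrix_matrix_mult_def sum_3 vector_def algebra_simps)

lemma tendsto_det3:
  fixes A :: "real \<Rightarrow> real^3^3"
  assumes "has_matrix_derivative A A' t"
  shows "((\<lambda>s. det (A s)) \<longlongrightarrow> det (A t)) (at t)"
  using DERIV_isCont[OF has_real_derivative_det3[OF assms]] by (simp add: isCont_def)

(* Differentiability comes from the adjugate formula, the value from differentiating A A^-1 = 1. *)
lemma has_matrix_derivative_matrix_inv:
  fixes A :: "real \<Rightarrow> real^3^3"
  assumes A': "has_matrix_derivative A A' t" and det: "det (A t) \<noteq> 0"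
  shows "has_matrix_derivative (\<lambda>s. matrix_inv (A s)) (- (matrix_inv (A t) ** A' ** matrix_inv (A t))) t"
proof -
  have ev_det: "\<forall>\<^sub>F s in nhds t. det (A s) \<noteq> 0"
    using tendsto_det3[OF A'] det by (simp add: eventually_nhds_conv_at tendsto_imp_eventually_ne)
  have ev_inv: "\<forall>\<^sub>F s in nhds t. (1 / det (A s)) *\<^sub>R adjugate3 (A s) = matrix_inv (A s)"
    using ev_det by eventually_elim (simp add: matrix_inv_adjugate3)
  have "(\<lambda>s. ((1 / det (A s)) *\<^sub>R adjugate3 (A s)) $ i $ j) differentiable (at t)" for i j
  proof -
    have "(\<lambda>s. A s $ k $ l) differentiable (at t)" for k l
      using A' unfolding has_matrix_derivative_def real_differentiable_def by blast
    moreover have "(\<lambda>s. det (A s)) differentiable (at t)"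
      using has_real_derivative_det3[OF A'] real_differentiable_def by blast
    ultimately show ?thesis
      using det exhaust_3[of i] exhaust_3[of j]
      by (auto simp: adjugate3_def vector_def)
  qed
  then obtain B' where B': "has_matrix_derivative (\<lambda>s. matrix_inv (A s)) B' t"
    using has_matrix_derivative_transform_eventually[OF ev_inv has_matrix_derivative_deriv] by blast
  have "has_matrix_derivative (\<lambda>s. A s ** matrix_inv (A s)) (A' ** matrix_inv (A t) + A t ** B') t"
    using A' B' by (rule has_matrix_derivative_mult)
  moreover have "\<forall>\<^sub>F s in nhds t. mat 1 = A s ** matrix_inv (A s)"
    using ev_det by eventually_elim (simp add: matrix_inv_right invertible_det_nz)
  then have "has_matrix_derivative (\<lambda>s. A s ** matrix_inv (A s)) 0 t"
    by (rule has_matrix_derivative_transform_eventually[OF _ has_matrix_derivative_const])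
  ultimately have "A' ** matrix_inv (A t) + A t ** B' = 0"
    by (rule has_matrix_derivative_unique)
  then have "A t ** B' = - (A' ** matrix_inv (A t))"
    by (simp add: eq_neg_iff_add_eq_0 add.commute)
  then have "matrix_inv (A t) ** A t ** B' = - (matrix_inv (A t) ** A' ** matrix_inv (A t))"
    by (simp add: matrix_minus_right flip: matrix_mul_assoc)
  then show ?thesis
    using B' det by (simp add: matrix_inv_left invertible_det_nz)
qed

lemma has_real_derivative_vol:
  fixes A :: "real \<Rightarrow> real^3^3"
  assumes A': "has_matrix_derivative A A' t" and neg: "det (A t) < 0"
  shows "((\<lambda>s. vol (A s)) has_real_derivative vol (A t) / 2 * trace (matrix_inv (A t) ** A')) (at t)"
proof -
  define d d' r where "d = det (A t)" and "d' = trace (adjugate3 (A t) ** A')" and "r = sqrt (- d)"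
  have r: "r > 0" "d = - (r * r)"
    using neg by (simp_all add: d_def r_def)
  have det': "((\<lambda>s. det (A s)) has_real_derivative d') (at t)"
    unfolding d'_def using A' by (rule has_real_derivative_det3)
  have "\<forall>\<^sub>F s in nhds t. det (A s) < 0"
    using tendsto_det3[OF A'] neg by (simp add: eventually_nhds_conv_at order_tendstoD(2))
  then have ev: "\<forall>\<^sub>F s in nhds t. sqrt (- det (A s)) = vol (A s)"
    by eventually_elim (simp add: vol_def)
  have "((\<lambda>s. sqrt (- det (A s))) has_real_derivative inverse r / 2 * (- d')) (at t)"
    using DERIV_chain2[OF DERIV_real_sqrt DERIV_minus[OF det']] neg unfolding r_def d_def by simp
  then have vol': "((\<lambda>s. vol (A s)) has_real_derivative inverse r / 2 * (- d')) (at t)"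
    by (rule DERIV_cong_ev[OF refl ev refl, THEN iffD1])
  have "vol (A t) / 2 * trace (matrix_inv (A t) ** A') = r / 2 * (d' / d)"
    using neg
    by (simp add: d_def d'_def r_def vol_def matrix_inv_adjugate3 trace_scaleR flip: scalar_matrix_assoc)
  also have "\<dots> = inverse r / 2 * (- d')"
    using r(1) unfolding r(2) by (simp add: field_simps)
  finally show ?thesis
    using vol' by simp
qed

lemma has_matrix_derivative_coord_line:
  assumes "\<And>i j. pd_exists m (\<lambda>q. F q $ i $ j) p"
  shows "has_matrix_derivative (\<lambda>t. F (p + t *\<^sub>R axis m 1)) (mat_pd m F p) 0"
  using assms
  by (simp add: has_matrix_derivative_def mat_pd_def pd_def pd_exists_def coord_line_def
      DERIV_deriv_iff_real_differentiable)

lemma has_vec_derivative_coord_line: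
  assumes "\<And>i. pd_exists m (\<lambda>q. x q $ i) p"
  shows "has_vec_derivative (\<lambda>t. x (p + t *\<^sub>R axis m 1)) (\<chi> i. pd m (\<lambda>q. x q $ i) p) 0"
  using assms
  by (simp add: has_vec_derivative_def pd_def pd_exists_def coord_line_def
      DERIV_deriv_iff_real_differentiable)

lemma mat_pd_eqI:
  assumes "has_matrix_derivative (\<lambda>t. F (p + t *\<^sub>R axis m 1)) F' 0"
  shows "mat_pd m F p = F'"
  using assms
  by (simp add: has_matrix_derivative_def mat_pd_def pd_def coord_line_def vec_eq_iff DERIV_imp_deriv)

lemma column_coord_jacobian_eqI:
  assumes "has_vec_derivative (\<lambda>t. x (p + t *\<^sub>R axis m 1)) x' 0"
  shows "column m (coord_jacobian x p) = x'"
  using assms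
  by (simp add: has_vec_derivative_def coord_jacobian_def column_def pd_def coord_line_def vec_eq_iff
      DERIV_imp_deriv)

(* The derivative of vol G *R G^-1 ** [x]_x when G and x move with velocities G' and x'. *)
definition phi_variation :: "real^3^3 \<Rightarrow> real^3 \<Rightarrow> real^3^3 \<Rightarrow> real^3 \<Rightarrow> real^3^3" where
  "phi_variation G x G' x' =
     (vol G / 2 * trace (matrix_inv G ** G')) *\<^sub>R (matrix_inv G ** cross_matrix x)
     + vol G *\<^sub>R (matrix_inv G ** cross_matrix x'
                     - matrix_inv G ** G' ** matrix_inv G ** cross_matrix x)"

lemma phi_variation_zero: "phi_variation G x 0 0 = 0"
  by (simp add: phi_variation_def cross_matrix_zero trace_0[unfolded mat_0])

lemma phi_variation_add_scaleR:
  "phi_variation G x (c *\<^sub>R A + B) (c *\<^sub>R y + z) = c *\<^sub>R phi_variation G x A y + phi_variation G x B z"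
  by (simp add: phi_variation_def matrix_add_ldistrib matrix_add_rdistrib matrix_scalar_ac trace_add
      trace_scaleR cross_matrix_add cross_matrix_scaleR algebra_simps
      flip: scalar_matrix_assoc)

lemma phi_variation_sum:
  assumes "finite S"
  shows "(\<Sum>m\<in>S. c m *\<^sub>R phi_variation G x (G' m) (x' m))
    = phi_variation G x (\<Sum>m\<in>S. c m *\<^sub>R G' m) (\<Sum>m\<in>S. c m *\<^sub>R x' m)"
  using assms by induction (simp_all add: phi_variation_zero phi_variation_add_scaleR)

lemma phi_variation_Killing:
  fixes G J :: "real^3^3"
  assumes "invertible G"
  shows "phi_variation G x (- (transpose J ** G + G ** J)) (J *v x)
    = J ** (vol G *\<^sub>R (matrix_inv G ** cross_matrix x))
      - (vol G *\<^sub>R (matrix_inv G ** cross_matrix x)) ** J"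
proof -
  define Gi C where "Gi = matrix_inv G" and "C = cross_matrix x"
  have G_Gi: "G ** Gi = mat 1" and Gi_G: "Gi ** G = mat 1"
    using assms by (simp_all add: Gi_def matrix_inv_right matrix_inv_left)
  have tr: "trace (Gi ** (- (transpose J ** G + G ** J))) = - 2 * trace J"
  proof -
    have "trace (Gi ** (transpose J ** G)) = trace J"
      by (metis G_Gi matrix_mul_assoc matrix_mul_rid trace_mul_sym trace_transpose)
    moreover have "trace (Gi ** (G ** J)) = trace J"
      by (metis Gi_G matrix_mul_assoc matrix_mul_lid)
    ultimately show ?thesis
      by (simp add: matrix_minus_right matrix_diff_ldistrib trace_uminus trace_sub)
  qed
  have conj: "Gi ** (- (transpose J ** G + G ** J)) ** Gi = - (Gi ** transpose J + J ** Gi)"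
  proof -
    have "Gi ** (transpose J ** G) ** Gi = Gi ** transpose J"
      by (metis G_Gi matrix_mul_assoc matrix_mul_rid)
    moreover have "Gi ** (G ** J) ** Gi = J ** Gi"
      by (metis Gi_G matrix_mul_assoc matrix_mul_lid)
    ultimately show ?thesis
      by (simp add: matrix_minus_right matrix_minus_left matrix_diff_ldistrib matrix_diff_rdistrib)
  qed
  have "phi_variation G x (- (transpose J ** G + G ** J)) (J *v x)
      = vol G *\<^sub>R (Gi ** (transpose J ** C + C ** J + cross_matrix (J *v x) - trace J *\<^sub>R C)
          + J ** Gi ** C - Gi ** C ** J)"
    unfolding phi_variation_def Gi_def[symmetric] C_def[symmetric] tr conj
    by (simp add: matrix_add_ldistrib matrix_add_rdistrib matrix_diff_ldistrib matrix_diff_rdistrib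
        matrix_minus_left matrix_mul_assoc matrix_scalar_ac algebra_simps flip: scalar_matrix_assoc)
  also have "\<dots> = J ** (vol G *\<^sub>R (Gi ** C)) - (vol G *\<^sub>R (Gi ** C)) ** J"
    unfolding C_def transpose_mult_cross_matrix
    by (simp add: matrix_scalar_ac matrix_mul_assoc algebra_simps flip: scalar_matrix_assoc)
  finally show ?thesis
    by (simp add: Gi_def C_def)
qed

lemma mat_pd_phi:
  assumes neg: "det (g p) < 0"
    and g_pd: "\<And>i j. pd_exists m (\<lambda>q. g q $ i $ j) p"
    and \<alpha>_pd: "\<And>i. pd_exists m (\<lambda>q. \<alpha> q $ i) p"
  shows "mat_pd m (phi g \<alpha>) p
    = phi_variation (g p) (reeb g \<alpha> p) (mat_pd m g p) (column m (coord_jacobian (reeb g \<alpha>) p))"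
proof -
  define \<gamma> where "\<gamma> t = p + t *\<^sub>R axis m 1" for t :: real
  have \<gamma>0: "\<gamma> 0 = p"
    by (simp add: \<gamma>_def)
  have g': "has_matrix_derivative (\<lambda>t. g (\<gamma> t)) (mat_pd m g p) 0"
    unfolding \<gamma>_def using g_pd by (rule has_matrix_derivative_coord_line)
  have ginv': "has_matrix_derivative (\<lambda>t. matrix_inv (g (\<gamma> t)))
      (- (matrix_inv (g p) ** mat_pd m g p ** matrix_inv (g p))) 0"
    using has_matrix_derivative_matrix_inv[OF g'] neg by (simp add: \<gamma>0)
  have "has_vec_derivative (\<lambda>t. reeb g \<alpha> (\<gamma> t))
      (- (matrix_inv (g p) ** mat_pd m g p ** matrix_inv (g p)) *v \<alpha> p
       + matrix_inv (g p) *v (\<chi> i. pd m (\<lambda>q. \<alpha> q $ i) p)) 0"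
    using has_vec_derivative_matrix_vector_mult[OF ginv' has_vec_derivative_coord_line[OF \<alpha>_pd]]
    by (simp add: reeb_def \<gamma>_def)
  then have \<xi>': "has_vec_derivative (\<lambda>t. reeb g \<alpha> (\<gamma> t)) (column m (coord_jacobian (reeb g \<alpha>) p)) 0"
    using column_coord_jacobian_eqI unfolding \<gamma>_def by metis
  have "has_matrix_derivative (\<lambda>t. phi g \<alpha> (\<gamma> t))
      (phi_variation (g p) (reeb g \<alpha> p) (mat_pd m g p) (column m (coord_jacobian (reeb g \<alpha>) p))) 0"
    using has_matrix_derivative_scaleR[OF has_real_derivative_vol[OF g']
        has_matrix_derivative_mult[OF ginv' has_matrix_derivative_cross_matrix[OF \<xi>']]] neg
    by (simp add: phi_eq_cross_matrix phi_variation_def \<gamma>0 matrix_minus_left algebra_simps)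
  then show ?thesis
    unfolding \<gamma>_def by (rule mat_pd_eqI)
qed

theorem mainTheorem5:
  fixes U :: "(real^3) set" and g :: "real^3 \<Rightarrow> real^3^3" and \<alpha> :: "real^3 \<Rightarrow> real^3"
  assumes "null_contact U g \<alpha>"
    and "K_contact U g \<alpha>"
  shows "sasakian U g \<alpha>"
  unfolding sasakian_def
proof
  fix p assume "p \<in> U"
  define \<xi> J where "\<xi> = reeb g \<alpha>" and "J = coord_jacobian \<xi> p"
  have neg: "det (g p) < 0"
    using assms(1) \<open>p \<in> U\<close> det_lt_0_if_lorentzian
    unfolding null_contact_def lorentz_metric_on_def by blast
  have g_pd: "pd_exists m (\<lambda>q. g q $ i $ j) p" and \<alpha>_pd: "pd_exists m (\<lambda>q. \<alpha> q $ i) p" for m i j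
    using assms(1) \<open>p \<in> U\<close> pd_exists_if_smooth_fun_on
    unfolding null_contact_def lorentz_metric_on_def by blast+
  have "(\<Sum>m\<in>UNIV. \<xi> p $ m *\<^sub>R mat_pd m g p) + (transpose J ** g p + g p ** J) = 0"
    using assms(2) \<open>p \<in> U\<close> unfolding K_contact_def lie02_matrix_form \<xi>_def J_def
    by (simp add: add.assoc)
  then have Killing: "(\<Sum>m\<in>UNIV. \<xi> p $ m *\<^sub>R mat_pd m g p) = - (transpose J ** g p + g p ** J)"
    by (rule eq_neg_iff_add_eq_0[THEN iffD2])
  have "frak_h g \<alpha> p
      = (\<Sum>m\<in>UNIV. \<xi> p $ m *\<^sub>R mat_pd m (phi g \<alpha>) p) - J ** phi g \<alpha> p + phi g \<alpha> p ** J"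
    unfolding frak_h_def lie11_matrix_form \<xi>_def J_def ..
  also have "(\<Sum>m\<in>UNIV. \<xi> p $ m *\<^sub>R mat_pd m (phi g \<alpha>) p)
      = phi_variation (g p) (\<xi> p) (\<Sum>m\<in>UNIV. \<xi> p $ m *\<^sub>R mat_pd m g p) (J *v \<xi> p)"
    unfolding \<xi>_def J_def
    by (simp add: mat_pd_phi[OF neg g_pd \<alpha>_pd] phi_variation_sum coord_jacobian_mult)
  also have "\<dots> = J ** phi g \<alpha> p - phi g \<alpha> p ** J"
    unfolding Killing phi_eq_cross_matrix \<xi>_def[symmetric]
    using neg by (intro phi_variation_Killing) (simp add: invertible_det_nz)
  finally show "frak_h g \<alpha> p = 0"
    by simp
qed

end
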